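(* Consider problem (P) and suppose Assumptions A and B hold. Then: (i) Algorithm SCP$_{ls}$ is well defined: every subproblem (S) arising in the algorithm has a unique solution, and there is $k_0\in\mathbb N_+$, independent of $t$, such that at every outer iteration $t\ge 0$ the inner loop (step (3)) terminates after at most $k_0$ inner iterations, producing $x^{t+1}$ with $g(x^{t+1})\le 0$. (ii) The sequence $\{(L_f^t,L_g^t)\}$ generated by SCP$_{ls}$ is bounded. (iii) For every $t\ge 0$, every trial pair $(\tilde L_f,\tilde L_g)$ used in the inner loop at iteration $t$ and every $i\in\{1,\dots,m\}$, the number $\tilde R_i:=\big\|\nabla g_i(x^t)/(\tilde L_g)_i\big\|^2-\frac{2}{(\tilde L_g)_i}g_i(x^t)$ is strictly positive. (iv) For every $t\ge0$ and every trial pair $(\tilde L_f,\tilde L_g)$ at iteration $t$, with $\tilde x$ the solution of (S), the subproblem (S) has a Lagrange multiplier $\tilde\lambda\in\mathbb R^m_+$; setting $\tilde L_{fg}:=\tilde L_f+\langle\tilde\lambda,\tilde L_g\rangle$, one has $\tilde\lambda_i\big(g_i(x^t)+\langle\nabla g_i(x^t),\tilde x-x^t\rangle+\frac{(\tilde L_g)_i}{2}\|\tilde x-x^t\|^2\big)=0$ for all $i$, and $0\in\nabla f(x^t)-\xi^t+\tilde L_{fg}(\tilde x-x^t)+\partial P_1(\tilde x)+\sum_{i=1}^m\tilde\lambda_i\nabla g_i(x^t)$. Moreover, if $g(\tilde x)\le 0$, then for every $x\in\mathbb R^n$, $F(\tilde x)\le f(x^t)+\langle\nabla f(x^t)-\xi^t,x-x^t\rangle+\frac{\tilde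 L_{fg}}{2}\|x-x^t\|^2+P_1(x)-P_2(x^t)+\sum_{i=1}^m\tilde\lambda_i\big(g_i(x^t)+\langle\nabla g_i(x^t),x-x^t\rangle\big)-\frac{\tilde L_{fg}}{2}\|x-\tilde x\|^2-\frac{\tilde L_f-L_f}{2}\|\tilde x-x^t\|^2$, where $L_f$ is the Lipschitz modulus of $\nabla f$ from Assumption A(i).
   Context: Problem (P): $\min_{x\in\mathbb R^n}F(x):=f(x)+P_1(x)-P_2(x)+\delta_{\{g\le 0\}}(x)$, where $f:\mathbb R^n\to\mathbb R$ is continuously differentiable, $P_1,P_2:\mathbb R^n\to\mathbb R$ are convex and continuous (possibly nonsmooth), $g=(g_1,\dots,g_m):\mathbb R^n\to\mathbb R^m$ is continuous with $\{x:g(x)\le0\}\neq\emptyset$ (inequalities between vectors are componentwise), and $\delta_C$ denotes the indicator function of $C$ (equal to $0$ on $C$ and $+\infty$ outside). $\partial$ denotes the (limiting) subdifferential; for convex functions it is the usual convex subdifferential. Assumption A: (i) $\nabla f$ is Lipschitz with modulus $L_f$; (ii) each $g_i$ is differentiable with $\nabla g_i$ Lipschitz with modulus $L_{g_i}$; (iii) $F$ is level-bounded. Assumption B (MFCQ): each $g_i$ is continuously differentiable and for every $x$ with $g(x)\le0$ there exists $d\in\mathbb R^n$ with $\langle\nabla g_i(x),d\rangle<0$ for all $i\in I(x):=\{j:g_j(x)=0\}$. For $x,y\in\mathbb R^n$, $w\in\mathbb R^m$, let $\bar G(x,y,w)\in\mathbb R^m$ have components $\bar G_i(x,y,w)=g_i(y)+\langle\nabla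 g_i(y),x-y\rangle+\frac{w_i}{2}\|x-y\|^2$. Algorithm SCP$_{ls}$: fix $c>0$, $0<\underline L<\bar L$, $\tau>1$ and $x^0$ with $g(x^0)\le0$. For $t=0,1,2,\dots$: (1) pick any $\xi^t\in\partial P_2(x^t)$; (2) choose $L_f^{t,0}\in[\underline L,\bar L]$ and $L_g^{t,0}\in[\underline L,\bar L]^m$ arbitrarily and set $\tilde L_f=L_f^{t,0}$, $\tilde L_g=L_g^{t,0}$; (3) compute $\tilde x$ solving the subproblem (S): minimize $\langle\nabla f(x^t)-\xi^t,x-x^t\rangle+\frac{\tilde L_f}{2}\|x-x^t\|^2+P_1(x)$ subject to $\bar G(x,x^t,\tilde L_g)\le0$. If $g(\tilde x)\le0$ and $F(\tilde x)\le F(x^t)-\frac c2\|\tilde x-x^t\|^2$, set $x^{t+1}=\tilde x$, $L_f^t=\tilde L_f$, $L_g^t=\tilde L_g$ and go to iteration $t+1$. Otherwise, if $g(\tilde x)\not\le0$ replace $\tilde L_g$ by $\tau\tilde L_g$, while if $g(\tilde x)\le0$ but the decrease inequality fails replace $\tilde L_f$ by $\tau\tilde L_f$; then repeat step (3) (these repetitions are the inner loop). The algorithm produces infinite sequences $\{x^t\},\{\xi^t\},\{L_f^t\},\{L_g^t\}$. A Lagrange multiplier of (S) is a vector $\lambda\in\mathbb R^m_+$ such that $\tilde x$ minimizes $x\mapsto\langle\nabla f(x^t)-\xi^t,x-x^t\rangle+\frac{\tilde L_f}{2}\|x-x^t\|^2+P_1(x)+\langle\lambda,\bar G(x,x^t,\tilde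 L_g)\rangle$ over $\mathbb R^n$ and $\lambda_i\bar G_i(\tilde x,x^t,\tilde L_g)=0$ for all $i$. *)

theory Defs
  imports "HOL-Analysis.Analysis"
begin

text \<open>Problem data convention: the constraint map g = (g_1,...,g_m) is given as
  g :: nat => 'a => real with components indexed by i < m; gg i x is the gradient of g i at x.
  Vectors in R^m (like L_g, lambda) are functions nat => real, only entries i < m matter.\<close>

definition subgrad :: "('a::real_inner \<Rightarrow> real) \<Rightarrow> 'a \<Rightarrow> 'a set" where
  "subgrad P x = {v. \<forall>y. P x + v \<bullet> (y - x) \<le> P y}"

definition feas :: "nat \<Rightarrow> (nat \<Rightarrow> 'a \<Rightarrow> real) \<Rightarrow> 'a \<Rightarrow> bool" where
  "feas m g x \<longleftrightarrow> (\<forall>i<m. g i x \<le> 0)"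

text \<open>Finite part of F (F = Fval + indicator of the feasible set).\<close>
definition Fval :: "('a \<Rightarrow> real) \<Rightarrow> ('a \<Rightarrow> real) \<Rightarrow> ('a \<Rightarrow> real) \<Rightarrow> 'a \<Rightarrow> real" where
  "Fval f P1 P2 x = f x + P1 x - P2 x"

definition Gbar :: "(nat \<Rightarrow> 'a::real_inner \<Rightarrow> real) \<Rightarrow> (nat \<Rightarrow> 'a \<Rightarrow> 'a) \<Rightarrow> 'a \<Rightarrow> 'a \<Rightarrow> (nat \<Rightarrow> real) \<Rightarrow> nat \<Rightarrow> real" where
  "Gbar g gg x y w i = g i y + gg i y \<bullet> (x - y) + w i / 2 * (norm (x - y))\<^sup>2"

definition sub_obj :: "('a::real_inner \<Rightarrow> 'a) \<Rightarrow> ('a \<Rightarrow> real) \<Rightarrow> 'a \<Rightarrow> 'a \<Rightarrow> real \<Rightarrow> 'a \<Rightarrow> real" where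
  "sub_obj gf P1 xt \<xi> Lf x = (gf xt - \<xi>) \<bullet> (x - xt) + Lf / 2 * (norm (x - xt))\<^sup>2 + P1 x"

definition sub_feas :: "nat \<Rightarrow> (nat \<Rightarrow> 'a::real_inner \<Rightarrow> real) \<Rightarrow> (nat \<Rightarrow> 'a \<Rightarrow> 'a) \<Rightarrow> 'a \<Rightarrow> (nat \<Rightarrow> real) \<Rightarrow> 'a \<Rightarrow> bool" where
  "sub_feas m g gg xt Lg x \<longleftrightarrow> (\<forall>i<m. Gbar g gg x xt Lg i \<le> 0)"

definition is_sub_sol :: "nat \<Rightarrow> ('a::real_inner \<Rightarrow> 'a) \<Rightarrow> (nat \<Rightarrow> 'a \<Rightarrow> real) \<Rightarrow> (nat \<Rightarrow> 'a \<Rightarrow> 'a)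
    \<Rightarrow> ('a \<Rightarrow> real) \<Rightarrow> 'a \<Rightarrow> 'a \<Rightarrow> real \<Rightarrow> (nat \<Rightarrow> real) \<Rightarrow> 'a \<Rightarrow> bool" where
  "is_sub_sol m gf g gg P1 xt \<xi> Lf Lg z \<longleftrightarrow>
     sub_feas m g gg xt Lg z \<and>
     (\<forall>x. sub_feas m g gg xt Lg x \<longrightarrow> sub_obj gf P1 xt \<xi> Lf z \<le> sub_obj gf P1 xt \<xi> Lf x)"

definition sub_sol :: "nat \<Rightarrow> ('a::real_inner \<Rightarrow> 'a) \<Rightarrow> (nat \<Rightarrow> 'a \<Rightarrow> real) \<Rightarrow> (nat \<Rightarrow> 'a \<Rightarrow> 'a)
    \<Rightarrow> ('a \<Rightarrow> real) \<Rightarrow> 'a \<Rightarrow> 'a \<Rightarrow> real \<Rightarrow> (nat \<Rightarrow> real) \<Rightarrow> 'a" where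
  "sub_sol m gf g gg P1 xt \<xi> Lf Lg = (THE z. is_sub_sol m gf g gg P1 xt \<xi> Lf Lg z)"

definition accepted :: "nat \<Rightarrow> ('a::real_inner \<Rightarrow> real) \<Rightarrow> ('a \<Rightarrow> 'a) \<Rightarrow> (nat \<Rightarrow> 'a \<Rightarrow> real) \<Rightarrow> (nat \<Rightarrow> 'a \<Rightarrow> 'a)
    \<Rightarrow> ('a \<Rightarrow> real) \<Rightarrow> ('a \<Rightarrow> real) \<Rightarrow> real \<Rightarrow> 'a \<Rightarrow> 'a \<Rightarrow> real \<times> (nat \<Rightarrow> real) \<Rightarrow> bool" where
  "accepted m f gf g gg P1 P2 c xt \<xi> LL \<longleftrightarrow>
     (let z = sub_sol m gf g gg P1 xt \<xi> (fst LL) (snd LL) in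
       feas m g z \<and> Fval f P1 P2 z \<le> Fval f P1 P2 xt - c / 2 * (norm (z - xt))\<^sup>2)"

definition trial_step :: "nat \<Rightarrow> ('a::real_inner \<Rightarrow> real) \<Rightarrow> ('a \<Rightarrow> 'a) \<Rightarrow> (nat \<Rightarrow> 'a \<Rightarrow> real) \<Rightarrow> (nat \<Rightarrow> 'a \<Rightarrow> 'a)
    \<Rightarrow> ('a \<Rightarrow> real) \<Rightarrow> ('a \<Rightarrow> real) \<Rightarrow> real \<Rightarrow> real \<Rightarrow> 'a \<Rightarrow> 'a
    \<Rightarrow> real \<times> (nat \<Rightarrow> real) \<Rightarrow> real \<times> (nat \<Rightarrow> real)" where
  "trial_step m f gf g gg P1 P2 c \<tau> xt \<xi> LL =
     (let z = sub_sol m gf g gg P1 xt \<xi> (fst LL) (snd LL) in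
       if \<not> feas m g z then (fst LL, \<lambda>i. \<tau> * snd LL i)
       else if Fval f P1 P2 z \<le> Fval f P1 P2 xt - c / 2 * (norm (z - xt))\<^sup>2 then LL
       else (\<tau> * fst LL, snd LL))"

definition trials :: "nat \<Rightarrow> ('a::real_inner \<Rightarrow> real) \<Rightarrow> ('a \<Rightarrow> 'a) \<Rightarrow> (nat \<Rightarrow> 'a \<Rightarrow> real) \<Rightarrow> (nat \<Rightarrow> 'a \<Rightarrow> 'a)
    \<Rightarrow> ('a \<Rightarrow> real) \<Rightarrow> ('a \<Rightarrow> real) \<Rightarrow> real \<Rightarrow> real \<Rightarrow> 'a \<Rightarrow> 'a
    \<Rightarrow> real \<times> (nat \<Rightarrow> real) \<Rightarrow> nat \<Rightarrow> real \<times> (nat \<Rightarrow> real)" where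
  "trials m f gf g gg P1 P2 c \<tau> xt \<xi> LL0 k = (trial_step m f gf g gg P1 P2 c \<tau> xt \<xi> ^^ k) LL0"

text \<open>Index of the accepted trial (number of inner iterations minus one).\<close>
definition acc_index :: "nat \<Rightarrow> ('a::real_inner \<Rightarrow> real) \<Rightarrow> ('a \<Rightarrow> 'a) \<Rightarrow> (nat \<Rightarrow> 'a \<Rightarrow> real) \<Rightarrow> (nat \<Rightarrow> 'a \<Rightarrow> 'a)
    \<Rightarrow> ('a \<Rightarrow> real) \<Rightarrow> ('a \<Rightarrow> real) \<Rightarrow> real \<Rightarrow> real \<Rightarrow> 'a \<Rightarrow> 'a \<Rightarrow> real \<times> (nat \<Rightarrow> real) \<Rightarrow> nat" where
  "acc_index m f gf g gg P1 P2 c \<tau> xt \<xi> LL0 =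
     (LEAST k. accepted m f gf g gg P1 P2 c xt \<xi> (trials m f gf g gg P1 P2 c \<tau> xt \<xi> LL0 k))"

text \<open>Outer iterates x^t of SCP_ls, for choice rules xisel (xi^t = xisel t x^t) and
  initial pairs (Lf0 t, Lg0 t).\<close>
primrec scp_x :: "nat \<Rightarrow> ('a::real_inner \<Rightarrow> real) \<Rightarrow> ('a \<Rightarrow> 'a) \<Rightarrow> (nat \<Rightarrow> 'a \<Rightarrow> real) \<Rightarrow> (nat \<Rightarrow> 'a \<Rightarrow> 'a)
    \<Rightarrow> ('a \<Rightarrow> real) \<Rightarrow> ('a \<Rightarrow> real) \<Rightarrow> real \<Rightarrow> real \<Rightarrow> 'a \<Rightarrow> (nat \<Rightarrow> 'a \<Rightarrow> 'a)
    \<Rightarrow> (nat \<Rightarrow> real) \<Rightarrow> (nat \<Rightarrow> nat \<Rightarrow> real) \<Rightarrow> nat \<Rightarrow> 'a" where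
  "scp_x m f gf g gg P1 P2 c \<tau> x0 xisel Lf0 Lg0 0 = x0"
| "scp_x m f gf g gg P1 P2 c \<tau> x0 xisel Lf0 Lg0 (Suc t) =
     (let xt = scp_x m f gf g gg P1 P2 c \<tau> x0 xisel Lf0 Lg0 t;
          \<xi> = xisel t xt;
          LL = trials m f gf g gg P1 P2 c \<tau> xt \<xi> (Lf0 t, Lg0 t)
                 (acc_index m f gf g gg P1 P2 c \<tau> xt \<xi> (Lf0 t, Lg0 t))
      in sub_sol m gf g gg P1 xt \<xi> (fst LL) (snd LL))"

end

theory Submission
  imports Defs
begin

text \<open>Each subproblem (S) minimises a strongly convex function over an intersection of convex
  quadratic sublevel sets that contains x^t, so it has a unique solution. MFCQ at x^t provides a
  Slater point of (S); at the solution the objective cannot decrease along directions feasible for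
  the linearised active constraints, and separating the strict epigraph of this variation from
  that cone, followed by Farkas' lemma, yields the Lagrange multipliers of (iv). By the descent
  lemma a trial pair whose entries dominate L_f + c and the moduli L_{g_i} is accepted; since each
  rejection multiplies by \<tau> an entry that is still below its modulus, the number of inner
  iterations is bounded independently of t, which gives (i) and (ii). Part (iii) follows from
  feasibility of x^t and MFCQ.\<close>

lemma norm_diff_sq_split:
  fixes x y p :: "'a::real_inner"
  shows "(norm (x - p))\<^sup>2 = (norm (y - p))\<^sup>2 + 2 * ((y - p) \<bullet> (x - y)) + (norm (x - y))\<^sup>2"
  using dot_norm[of "y - p" "x - y"] by simp

lemma norm_sq_convex_comb:
  fixes x y p :: "'a::real_inner"
  shows "(norm ((1 - s) *\<^sub>R y + s *\<^sub>R x - p))\<^sup>2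
    = (1 - s) * (norm (y - p))\<^sup>2 + s * (norm (x - p))\<^sup>2 - s * (1 - s) * (norm (x - y))\<^sup>2"
proof -
  have e: "(1 - s) *\<^sub>R y + s *\<^sub>R x - p = (y - p) + s *\<^sub>R (x - y)" by (simp add: algebra_simps)
  have "(norm ((y - p) + s *\<^sub>R (x - y)))\<^sup>2
      = (norm (y - p))\<^sup>2 + 2 * s * ((y - p) \<bullet> (x - y)) + s\<^sup>2 * (norm (x - y))\<^sup>2"
    using dot_norm[of "y - p" "s *\<^sub>R (x - y)"] by (simp add: power_mult_distrib)
  then show ?thesis
    unfolding e norm_diff_sq_split[of x p y] by (simp add: algebra_simps power2_eq_square)
qed

lemma nonneg_if_eventually_nonneg_affine:
  fixes D E :: real
  assumes "eventually (\<lambda>s. 0 \<le> D + s * E) (at_right 0)"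
  shows "0 \<le> D"
proof -
  have "((\<lambda>s. D + s * E) \<longlongrightarrow> D + 0 * E) (at_right 0)" by (intro tendsto_intros)
  then show ?thesis using tendsto_lowerbound[OF _ assms] by simp
qed

lemma eventually_neg_at_right_0:
  fixes a e k :: real
  assumes "a \<le> 0" and "a = 0 \<Longrightarrow> e < 0"
  shows "eventually (\<lambda>s. a + s * (e + k * s) < 0) (at_right 0)"
proof (cases "a = 0")
  case True
  have "((\<lambda>s. e + k * s) \<longlongrightarrow> e + k * 0) (at_right 0)" by (intro tendsto_intros)
  then have "eventually (\<lambda>s. e + k * s < 0) (at_right 0)"
    using assms(2)[OF True] by (auto dest: order_tendstoD(2))
  with eventually_at_right_less[of 0] show ?thesis
    by eventually_elim (simp add: True mult_pos_neg)
next
  case False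
  have "((\<lambda>s. a + s * (e + k * s)) \<longlongrightarrow> a + 0 * (e + k * 0)) (at_right 0)" by (intro tendsto_intros)
  then show ?thesis by (rule order_tendstoD(2)) (use assms(1) False in simp)
qed

lemma norm_scaleR_sq_minus_pos:
  fixes v :: "'a::real_normed_vector" and \<gamma> w :: real
  assumes "\<gamma> \<le> 0" and "\<gamma> = 0 \<Longrightarrow> v \<noteq> 0" and "0 < w"
  shows "0 < (norm (v /\<^sub>R w))\<^sup>2 - 2 / w * \<gamma>"
proof (cases "\<gamma> = 0")
  case True
  then show ?thesis using assms by simp
next
  case False
  then have "0 < - (2 / w * \<gamma>)" using assms by (simp add: divide_neg_pos mult_pos_neg)
  then show ?thesis using zero_le_power2[of "norm (v /\<^sub>R w)"] by linarith
qed

lemma convex_strict_epigraph: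
  assumes "convex_on S f"
  shows "convex {(x, r). x \<in> S \<and> f x < r}"
proof (rule convexI, clarsimp)
  fix x1 x2 and r1 r2 u v :: real
  assume x: "x1 \<in> S" "f x1 < r1" "x2 \<in> S" "f x2 < r2" and uv: "0 \<le> u" "0 \<le> v" "u + v = 1"
  have "convex S" using assms by (simp add: convex_on_def)
  then have "u *\<^sub>R x1 + v *\<^sub>R x2 \<in> S" using x uv by (simp add: convex_def)
  moreover have "f (u *\<^sub>R x1 + v *\<^sub>R x2) \<le> u * f x1 + v * f x2"
    using convex_onD[OF assms, of v x1 x2] x uv by (simp add: eq_diff_eq[symmetric])
  moreover have "u * f x1 + v * f x2 < u * r1 + v * r2"
  proof (cases "u = 0")
    case True
    then show ?thesis using x uv by simp
  next
    case False
    then have "u * f x1 < u * r1" using x uv by (intro mult_strict_left_mono) auto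
    moreover have "v * f x2 \<le> v * r2" using x uv by (intro mult_left_mono) auto
    ultimately show ?thesis by linarith
  qed
  ultimately show "u *\<^sub>R x1 + v *\<^sub>R x2 \<in> S \<and> f (u *\<^sub>R x1 + v *\<^sub>R x2) < u * r1 + v * r2" by simp
qed

lemma descent_lemma:
  fixes f :: "'a::real_inner \<Rightarrow> real"
  assumes fd: "\<And>x. (f has_derivative (\<lambda>h. gf x \<bullet> h)) (at x)" and lip: "L-lipschitz_on UNIV gf"
  shows "f y \<le> f x + gf x \<bullet> (y - x) + L / 2 * (norm (y - x))\<^sup>2"
proof -
  define d where "d = y - x"
  define \<psi> where "\<psi> s = f (x + s *\<^sub>R d) - s * (gf x \<bullet> d) - L / 2 * s\<^sup>2 * (norm d)\<^sup>2" for s :: real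
  have der: "(\<psi> has_real_derivative (gf (x + s *\<^sub>R d) \<bullet> d - gf x \<bullet> d - L * s * (norm d)\<^sup>2)) (at s)" for s
  proof -
    have "((\<lambda>s. x + s *\<^sub>R d) has_derivative (\<lambda>h. h *\<^sub>R d)) (at s)"
      by (auto intro!: derivative_eq_intros)
    from has_derivative_compose[OF this fd]
    have "((\<lambda>s. f (x + s *\<^sub>R d)) has_derivative (\<lambda>h. gf (x + s *\<^sub>R d) \<bullet> (h *\<^sub>R d))) (at s)"
      by (simp add: o_def)
    then have along_line: "((\<lambda>s. f (x + s *\<^sub>R d)) has_real_derivative (gf (x + s *\<^sub>R d) \<bullet> d)) (at s)"
      unfolding has_field_derivative_def by (simp add: mult.commute[of _ "gf (x + s *\<^sub>R d) \<bullet> d"])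
    show ?thesis unfolding \<psi>_def
      by (rule derivative_eq_intros along_line | simp)+
  qed
  have "\<psi> 1 \<le> \<psi> 0"
  proof (rule DERIV_nonpos_imp_nonincreasing[of 0 1 \<psi>])
    fix s :: real assume s: "0 \<le> s" "s \<le> 1"
    have "gf (x + s *\<^sub>R d) \<bullet> d - gf x \<bullet> d \<le> norm (gf (x + s *\<^sub>R d) - gf x) * norm d"
      by (metis inner_diff_left norm_cauchy_schwarz)
    also have "\<dots> \<le> (L * norm (s *\<^sub>R d)) * norm d"
      using lipschitz_onD[OF lip, of "x + s *\<^sub>R d" x] by (intro mult_right_mono) (auto simp: dist_norm)
    also have "\<dots> = L * s * (norm d)\<^sup>2" using s by (simp add: power2_eq_square)
    finally show "\<exists>y. (\<psi> has_real_derivative y) (at s) \<and> y \<le> 0"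
      using der[of s] by (intro exI[of _ "gf (x + s *\<^sub>R d) \<bullet> d - gf x \<bullet> d - L * s * (norm d)\<^sup>2"]) auto
  qed simp
  then show ?thesis unfolding \<psi>_def d_def by simp
qed

section \<open>Farkas' lemma and separation from a cone\<close>

lemma convex_cone_hull_subset_nonneg_combinations:
  assumes "finite I"
  shows "convex_cone hull (v ` I) \<subseteq> {\<Sum>i\<in>I. l i *\<^sub>R v i | l. \<forall>i\<in>I. 0 \<le> l i}" (is "_ \<subseteq> ?K")
proof (rule hull_minimal)
  show "v ` I \<subseteq> ?K"
  proof clarify
    fix j assume "j \<in> I"
    have "(\<Sum>i\<in>I. (if i = j then 1 else 0) *\<^sub>R v i) = (\<Sum>i\<in>I. if i = j then v i else 0)"
      by (rule sum.cong) auto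
    also have "\<dots> = v j" using \<open>j \<in> I\<close> assms by (simp add: sum.delta)
    finally have "v j = (\<Sum>i\<in>I. (if i = j then 1 else 0) *\<^sub>R v i)" ..
    then show "\<exists>l. v j = (\<Sum>i\<in>I. l i *\<^sub>R v i) \<and> (\<forall>i\<in>I. 0 \<le> l i)" by force
  qed
  show "convex_cone ?K"
    unfolding convex_cone_iff
  proof (intro conjI ballI allI impI)
    show "0 \<in> ?K"
      by (intro CollectI exI[of _ "\<lambda>_. 0"]) simp
  next
    fix x y assume "x \<in> ?K" "y \<in> ?K"
    then obtain l l' where "\<forall>i\<in>I. 0 \<le> l i" "\<forall>i\<in>I. 0 \<le> l' i"
      and "x = (\<Sum>i\<in>I. l i *\<^sub>R v i)" "y = (\<Sum>i\<in>I. l' i *\<^sub>R v i)" by blast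
    then show "x + y \<in> ?K"
      by (intro CollectI exI[of _ "\<lambda>i. l i + l' i"]) (simp add: scaleR_add_left sum.distrib)
  next
    fix x and c :: real assume "x \<in> ?K" "0 \<le> c"
    then obtain l where "\<forall>i\<in>I. 0 \<le> l i" "x = (\<Sum>i\<in>I. l i *\<^sub>R v i)" by blast
    with \<open>0 \<le> c\<close> show "c *\<^sub>R x \<in> ?K"
      by (intro CollectI exI[of _ "\<lambda>i. c * l i"]) (simp add: scaleR_sum_right)
  qed
qed

lemma farkas_finite_cone:
  fixes p :: "'a::euclidean_space" and v :: "'i \<Rightarrow> 'a"
  assumes "finite I" and polar: "\<And>d. \<forall>i\<in>I. v i \<bullet> d \<le> 0 \<Longrightarrow> p \<bullet> d \<le> 0"
  shows "\<exists>l. (\<forall>i\<in>I. 0 \<le> l i) \<and> p = (\<Sum>i\<in>I. l i *\<^sub>R v i)"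
proof -
  define K where "K = convex_cone hull (v ` I)"
  have "p \<in> K"
  proof (rule ccontr)
    assume "p \<notin> K"
    have "convex K" "closed K"
      unfolding K_def by (simp_all add: convex_convex_cone_hull closed_convex_cone_hull assms(1))
    from separating_hyperplane_closed_point[OF this \<open>p \<notin> K\<close>]
    obtain a b where ab: "a \<bullet> p < b" "\<And>x. x \<in> K \<Longrightarrow> b < a \<bullet> x" by blast
    have b0: "b < 0" using ab(2)[of 0] by (simp add: K_def convex_cone_hull_contains_0)
    have "v i \<bullet> (- a) \<le> 0" if i: "i \<in> I" for i
    proof (rule ccontr)
      assume "\<not> v i \<bullet> (- a) \<le> 0"
      then have neg: "a \<bullet> v i < 0" by (simp add: inner_commute)
      have "(b / (a \<bullet> v i)) *\<^sub>R v i \<in> K"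
        unfolding K_def using i neg b0 by (intro convex_cone_hull_mul hull_inc) (auto simp: zero_le_divide_iff)
      then have "b < a \<bullet> ((b / (a \<bullet> v i)) *\<^sub>R v i)" by (rule ab(2))
      then show False using neg by simp
    qed
    then have "p \<bullet> (- a) \<le> 0" using polar by blast
    then show False using ab(1) b0 by (simp add: inner_commute)
  qed
  moreover have "K \<subseteq> {\<Sum>i\<in>I. l i *\<^sub>R v i | l. \<forall>i\<in>I. 0 \<le> l i}"
    unfolding K_def using assms(1) by (rule convex_cone_hull_subset_nonneg_combinations)
  ultimately show ?thesis by blast
qed

lemma strict_epigraph_cone_separation:
  fixes \<Delta> :: "'a::euclidean_space \<Rightarrow> real"
  assumes \<Delta>: "convex_on UNIV \<Delta>" "\<Delta> 0 = 0"
    and C: "convex_cone C" and nonneg: "\<And>d. d \<in> C \<Longrightarrow> 0 \<le> \<Delta> d"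
  shows "\<exists>p p0. (p, p0) \<noteq> 0 \<and> p0 \<le> 0 \<and> (\<forall>d\<in>C. 0 \<le> p \<bullet> d) \<and> (\<forall>d. p \<bullet> d + p0 * \<Delta> d \<le> 0)"
proof -
  define A where "A = {(d, r). d \<in> UNIV \<and> \<Delta> d < r}"
  define B where "B = C \<times> {..0::real}"
  have "0 \<in> C" using C by (rule convex_cone_contains_0)
  have "convex A" unfolding A_def by (rule convex_strict_epigraph[OF \<Delta>(1)])
  moreover have "convex B" using C by (simp add: B_def convex_Times convex_cone_def)
  moreover have "(0, 1) \<in> A" "(0, 0) \<in> B" using \<open>0 \<in> C\<close> \<Delta>(2) by (simp_all add: A_def B_def)
  then have "A \<noteq> {}" "B \<noteq> {}" by auto
  moreover have "A \<inter> B = {}"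
  proof -
    have "(d, r) \<notin> B" if "(d, r) \<in> A" for d r using that nonneg[of d] by (auto simp: A_def B_def)
    then show ?thesis by auto
  qed
  ultimately obtain a b where "a \<noteq> 0" and hA: "\<And>x. x \<in> A \<Longrightarrow> a \<bullet> x \<le> b"
    and hB: "\<And>x. x \<in> B \<Longrightarrow> b \<le> a \<bullet> x"
    using separating_hyperplane_sets[of A B] by blast
  obtain p p0 where a: "a = (p, p0)" by force
  have below: "p \<bullet> d + p0 * r \<le> b" if "\<Delta> d < r" for d r
    using hA[of "(d, r)"] that by (simp add: A_def a)
  have pd: "p \<bullet> d + p0 * \<Delta> d \<le> b" for d
  proof -
    have "eventually (\<lambda>t. 0 \<le> (b - p \<bullet> d - p0 * \<Delta> d) + t * (- p0)) (at_right 0)"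
      using eventually_at_right_less[of 0]
    proof eventually_elim
      case (elim t)
      then show ?case using below[of d "\<Delta> d + t"] by (simp add: algebra_simps)
    qed
    then have "0 \<le> b - p \<bullet> d - p0 * \<Delta> d" by (rule nonneg_if_eventually_nonneg_affine)
    then show ?thesis by simp
  qed
  have "b \<le> 0" using hB[of "(0, 0)"] \<open>0 \<in> C\<close> by (simp add: B_def a)
  moreover have "0 \<le> b" using pd[of 0] \<Delta>(2) by simp
  ultimately have b: "b = 0" by simp
  have "p0 \<le> 0" using below[of 0 1] \<Delta>(2) b by simp
  moreover have "0 \<le> p \<bullet> d" if "d \<in> C" for d using hB[of "(d, 0)"] that b by (simp add: B_def a)
  ultimately show ?thesis using \<open>a \<noteq> 0\<close> pd b unfolding a by blast
qed

lemma convex_nonneg_on_cone_imp_multiplier: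
  fixes \<Delta> :: "'a::euclidean_space \<Rightarrow> real"
  assumes "convex_on UNIV \<Delta>" "\<Delta> 0 = 0"
    and "convex_cone C" and "\<And>d. d \<in> C \<Longrightarrow> 0 \<le> \<Delta> d"
  shows "\<exists>\<pi>. (\<forall>d\<in>C. \<pi> \<bullet> d \<le> 0) \<and> (\<forall>d. 0 \<le> \<Delta> d + \<pi> \<bullet> d)"
proof -
  obtain p p0 where nz: "(p, p0) \<noteq> 0" and "p0 \<le> 0"
    and pC: "\<And>d. d \<in> C \<Longrightarrow> 0 \<le> p \<bullet> d" and pd: "\<And>d. p \<bullet> d + p0 * \<Delta> d \<le> 0"
    using strict_epigraph_cone_separation[OF assms] by blast
  have "p0 \<noteq> 0"
  proof
    assume "p0 = 0"
    then have "p \<bullet> p \<le> 0" using pd[of p] by simp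
    then have "p = 0" by (metis inner_gt_zero_iff not_le)
    then show False using nz \<open>p0 = 0\<close> by (simp add: zero_prod_def)
  qed
  with \<open>p0 \<le> 0\<close> have p0: "p0 < 0" by simp
  show ?thesis
  proof (intro exI[of _ "(1 / p0) *\<^sub>R p"] conjI ballI allI)
    fix d assume "d \<in> C"
    then show "(1 / p0) *\<^sub>R p \<bullet> d \<le> 0" using pC p0 by (simp add: divide_nonneg_neg)
  next
    fix d
    have "p \<bullet> d \<le> - p0 * \<Delta> d" using pd[of d] by simp
    then show "0 \<le> \<Delta> d + (1 / p0) *\<^sub>R p \<bullet> d" using p0 by (simp add: field_simps)
  qed
qed

section \<open>The subproblem (S)\<close>

locale scp_subproblem =
  fixes m :: nat and gf :: "'a::euclidean_space \<Rightarrow> 'a" and g :: "nat \<Rightarrow> 'a \<Rightarrow> real"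
    and gg :: "nat \<Rightarrow> 'a \<Rightarrow> 'a" and P1 :: "'a \<Rightarrow> real" and xt \<xi> :: 'a
    and a :: real and w :: "nat \<Rightarrow> real"
  assumes P1_convex: "convex_on UNIV P1"
    and a_pos: "0 < a" and w_pos: "\<And>i. i < m \<Longrightarrow> 0 < w i"
begin

abbreviation "sfeas x \<equiv> sub_feas m g gg xt w x"
abbreviation "\<Phi> x \<equiv> sub_obj gf P1 xt \<xi> a x"
abbreviation "is_sol z \<equiv> is_sub_sol m gf g gg P1 xt \<xi> a w z"

lemma P1_continuous: "continuous_on UNIV P1"
  using convex_on_continuous[OF open_UNIV P1_convex] .

lemma Gbar_convex_comb:
  "Gbar g gg ((1 - s) *\<^sub>R y + s *\<^sub>R x) xt w i
   = (1 - s) * Gbar g gg y xt w i + s * Gbar g gg x xt w i - w i / 2 * (s * (1 - s) * (norm (x - y))\<^sup>2)"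
  unfolding Gbar_def norm_sq_convex_comb
  by (simp add: inner_diff_right inner_add_right algebra_simps) (simp add: field_simps)

lemma sub_feas_convex_comb:
  assumes "sfeas y" "sfeas x" "0 \<le> s" "s \<le> 1"
  shows "sfeas ((1 - s) *\<^sub>R y + s *\<^sub>R x)"
  unfolding sub_feas_def
proof (intro allI impI)
  fix i assume i: "i < m"
  have "0 \<le> w i / 2 * (s * (1 - s) * (norm (x - y))\<^sup>2)"
    using w_pos[OF i] assms by simp
  moreover have "(1 - s) * Gbar g gg y xt w i \<le> 0" "s * Gbar g gg x xt w i \<le> 0"
    using assms i by (auto simp: sub_feas_def intro: mult_nonneg_nonpos)
  ultimately show "Gbar g gg ((1 - s) *\<^sub>R y + s *\<^sub>R x) xt w i \<le> 0"
    unfolding Gbar_convex_comb by linarith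
qed

lemma sub_obj_convex_comb:
  assumes "0 \<le> s" "s \<le> 1"
  shows "\<Phi> ((1 - s) *\<^sub>R y + s *\<^sub>R x) \<le> (1 - s) * \<Phi> y + s * \<Phi> x - a / 2 * (s * (1 - s) * (norm (x - y))\<^sup>2)"
proof -
  have "P1 ((1 - s) *\<^sub>R y + s *\<^sub>R x) \<le> (1 - s) * P1 y + s * P1 x"
    using convex_onD[OF P1_convex, of s y x] assms by simp
  then show ?thesis
    unfolding sub_obj_def norm_sq_convex_comb
    by (simp add: inner_diff_right inner_add_right algebra_simps) (simp add: field_simps)
qed

lemma eventually_in_unit_interval: "eventually (\<lambda>s. 0 < s \<and> s < (1::real)) (at_right 0)"
  unfolding eventually_at_right_field by (intro exI[of _ 1]) auto

lemma sub_obj_growth: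
  assumes z: "is_sol z" and x: "sfeas x"
  shows "\<Phi> z + a / 2 * (norm (x - z))\<^sup>2 \<le> \<Phi> x"
proof -
  define N where "N = a / 2 * (norm (x - z))\<^sup>2"
  have "eventually (\<lambda>s. 0 \<le> (\<Phi> x - \<Phi> z - N) + s * N) (at_right 0)"
    using eventually_in_unit_interval
  proof eventually_elim
    case (elim s)
    have "sfeas ((1 - s) *\<^sub>R z + s *\<^sub>R x)"
      using z x elim by (intro sub_feas_convex_comb) (auto simp: is_sub_sol_def)
    then have "\<Phi> z \<le> \<Phi> ((1 - s) *\<^sub>R z + s *\<^sub>R x)" using z by (auto simp: is_sub_sol_def)
    also have "\<dots> \<le> (1 - s) * \<Phi> z + s * \<Phi> x - a / 2 * (s * (1 - s) * (norm (x - z))\<^sup>2)"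
      using elim by (intro sub_obj_convex_comb) auto
    also have "\<dots> = (1 - s) * \<Phi> z + s * \<Phi> x - (1 - s) * s * N"
      by (simp add: N_def)
    finally have "0 \<le> s * ((\<Phi> x - \<Phi> z - N) + s * N)" by (simp add: algebra_simps)
    then show ?case using elim by (simp add: zero_le_mult_iff)
  qed
  then have "0 \<le> \<Phi> x - \<Phi> z - N" by (rule nonneg_if_eventually_nonneg_affine)
  then show ?thesis unfolding N_def by simp
qed

lemma is_sub_sol_unique:
  assumes "is_sol z1" "is_sol z2"
  shows "z1 = z2"
proof -
  have "\<Phi> z1 + a / 2 * (norm (z2 - z1))\<^sup>2 \<le> \<Phi> z2"
    using assms by (intro sub_obj_growth) (auto simp: is_sub_sol_def)
  moreover have "\<Phi> z2 \<le> \<Phi> z1" using assms by (auto simp: is_sub_sol_def)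
  ultimately have "a / 2 * (norm (z2 - z1))\<^sup>2 \<le> 0" by simp
  then show ?thesis using a_pos by (simp add: mult_le_0_iff)
qed

lemma sub_obj_continuous: "continuous_on UNIV \<Phi>"
  unfolding sub_obj_def by (intro continuous_intros P1_continuous)

lemma closed_sub_feas: "closed {x. sfeas x}"
proof -
  have "{x. sfeas x} = (\<Inter>i<m. {x. Gbar g gg x xt w i \<le> 0})" by (auto simp: sub_feas_def)
  moreover have "closed {x. Gbar g gg x xt w i \<le> 0}" for i
    unfolding Gbar_def by (intro closed_Collect_le continuous_intros)
  ultimately show ?thesis by auto
qed

text \<open>Strong convexity along the segment from y to x, evaluated where it leaves the unit ball
  around y, makes \<Phi> grow linearly in norm (x - y).\<close>

lemma sub_obj_sublevel_bounded: "\<exists>R. \<forall>x. \<Phi> x \<le> \<Phi> y \<longrightarrow> norm (x - y) \<le> R"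
proof -
  obtain zmin where zmin: "\<And>p. p \<in> cball y 1 \<Longrightarrow> \<Phi> zmin \<le> \<Phi> p"
    using continuous_attains_inf[of "cball y 1" \<Phi>] continuous_on_subset[OF sub_obj_continuous]
    by (metis compact_cball cball_eq_empty not_one_less_zero subset_UNIV)
  have "norm (x - y) \<le> 1 + 2 * (\<Phi> y - \<Phi> zmin) / a" if x: "\<Phi> x \<le> \<Phi> y" for x
  proof (rule ccontr)
    define r where "r = norm (x - y)"
    assume "\<not> ?thesis"
    then have r: "1 + 2 * (\<Phi> y - \<Phi> zmin) / a < r" by (simp add: r_def)
    have "\<Phi> zmin \<le> \<Phi> y" using zmin[of y] by simp
    then have "0 \<le> 2 * (\<Phi> y - \<Phi> zmin) / a" using a_pos by simp
    then have "1 < r" using r by linarith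
    define p where "p = (1 - 1 / r) *\<^sub>R y + (1 / r) *\<^sub>R x"
    have "p - y = (1 / r) *\<^sub>R (x - y)" by (simp add: p_def algebra_simps)
    then have "p \<in> cball y 1" using \<open>1 < r\<close> by (simp add: dist_norm norm_minus_commute r_def)
    then have "\<Phi> zmin \<le> \<Phi> p" by (rule zmin)
    also have "\<Phi> p \<le> (1 - 1 / r) * \<Phi> y + (1 / r) * \<Phi> x - a / 2 * ((1 / r) * (1 - 1 / r) * (norm (x - y))\<^sup>2)"
      unfolding p_def using \<open>1 < r\<close> by (intro sub_obj_convex_comb) auto
    also have "\<dots> = \<Phi> y - (1 / r) * (\<Phi> y - \<Phi> x) - a / 2 * (r - 1)"
      using \<open>1 < r\<close> by (simp add: r_def[symmetric] power2_eq_square field_simps)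
    also have "\<dots> \<le> \<Phi> y - a / 2 * (r - 1)"
      using x \<open>1 < r\<close> by simp
    finally have "r \<le> 1 + 2 * (\<Phi> y - \<Phi> zmin) / a" using a_pos by (simp add: field_simps)
    then show False using r by simp
  qed
  then show ?thesis by blast
qed

lemma is_sub_sol_exists:
  assumes y: "sfeas y"
  shows "\<exists>z. is_sol z"
proof -
  define K where "K = {x. sfeas x} \<inter> {x. \<Phi> x \<le> \<Phi> y}"
  obtain R where R: "\<And>x. \<Phi> x \<le> \<Phi> y \<Longrightarrow> norm (x - y) \<le> R"
    using sub_obj_sublevel_bounded by blast
  have "compact K"
  proof -
    have "bounded K"
      using R by (intro bounded_subset[OF bounded_cball[of y R]]) (auto simp: K_def dist_norm norm_minus_commute)
    moreover have "closed K" unfolding K_def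
      by (intro closed_Int closed_sub_feas closed_Collect_le sub_obj_continuous continuous_on_const)
    ultimately show ?thesis by (simp add: compact_eq_bounded_closed)
  qed
  moreover have "K \<noteq> {}" using y by (auto simp: K_def)
  ultimately obtain z where z: "z \<in> K" and zmin: "\<And>x. x \<in> K \<Longrightarrow> \<Phi> z \<le> \<Phi> x"
    using continuous_attains_inf[of K \<Phi>] continuous_on_subset[OF sub_obj_continuous] by blast
  have "is_sol z" unfolding is_sub_sol_def
  proof (intro conjI allI impI)
    show "sfeas z" using z by (simp add: K_def)
    fix x assume "sfeas x"
    then show "\<Phi> z \<le> \<Phi> x" using zmin[of x] z by (cases "\<Phi> x \<le> \<Phi> y") (auto simp: K_def)
  qed
  then show ?thesis ..
qed

lemma sub_sol_unique_existence:
  assumes "sfeas y"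
  shows "\<exists>!z. is_sol z"
  using is_sub_sol_exists[OF assms] is_sub_sol_unique by blast


subsection \<open>Lagrange multipliers\<close>

lemma Gbar_expand:
  "Gbar g gg x xt w i
   = Gbar g gg y xt w i + (gg i xt + w i *\<^sub>R (y - xt)) \<bullet> (x - y) + w i / 2 * (norm (x - y))\<^sup>2"
  unfolding Gbar_def norm_diff_sq_split[of x xt y]
  by (simp add: inner_diff_right inner_add_left algebra_simps)

lemma sub_obj_expand:
  "\<Phi> x = \<Phi> y + (gf xt - \<xi> + a *\<^sub>R (y - xt)) \<bullet> (x - y) + a / 2 * (norm (x - y))\<^sup>2 + P1 x - P1 y"
  unfolding sub_obj_def norm_diff_sq_split[of x xt y]
  by (simp add: inner_diff_right inner_add_left algebra_simps)

lemma eventually_strictly_sub_feas_along: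
  assumes y: "sfeas y"
    and d: "\<And>i. i < m \<Longrightarrow> Gbar g gg y xt w i = 0 \<Longrightarrow> (gg i xt + w i *\<^sub>R (y - xt)) \<bullet> d < 0"
  shows "eventually (\<lambda>s. \<forall>i\<in>{..<m}. Gbar g gg (y + s *\<^sub>R d) xt w i < 0) (at_right 0)"
proof -
  have "eventually (\<lambda>s. Gbar g gg (y + s *\<^sub>R d) xt w i < 0) (at_right 0)" if i: "i < m" for i
  proof -
    have "Gbar g gg (y + s *\<^sub>R d) xt w i
        = Gbar g gg y xt w i + s * ((gg i xt + w i *\<^sub>R (y - xt)) \<bullet> d + w i / 2 * (norm d)\<^sup>2 * s)" for s
      using Gbar_expand[of "y + s *\<^sub>R d" i y] by (simp add: algebra_simps power2_eq_square)
    moreover have "eventually (\<lambda>s. Gbar g gg y xt w i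
        + s * ((gg i xt + w i *\<^sub>R (y - xt)) \<bullet> d + w i / 2 * (norm d)\<^sup>2 * s) < 0) (at_right 0)"
      using y i d by (intro eventually_neg_at_right_0) (auto simp: sub_feas_def)
    ultimately show ?thesis by simp
  qed
  then show ?thesis by (intro eventually_ball_finite) simp_all
qed

lemma slater_point_exists:
  assumes xt: "\<And>i. i < m \<Longrightarrow> g i xt \<le> 0" and d: "\<And>i. i < m \<Longrightarrow> g i xt = 0 \<Longrightarrow> gg i xt \<bullet> d < 0"
  shows "\<exists>xh. \<forall>i<m. Gbar g gg xh xt w i < 0"
proof -
  have "sfeas xt" using xt by (simp add: sub_feas_def Gbar_def)
  then have "eventually (\<lambda>s. \<forall>i\<in>{..<m}. Gbar g gg (xt + s *\<^sub>R d) xt w i < 0) (at_right 0)"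
    using d by (intro eventually_strictly_sub_feas_along) (auto simp: Gbar_def)
  then obtain s where "\<forall>i\<in>{..<m}. Gbar g gg (xt + s *\<^sub>R d) xt w i < 0"
    using eventually_happens'[of "at_right 0"] trivial_limit_at_right_real by blast
  then show ?thesis by auto
qed

lemma sub_obj_dir_nonneg_strict:
  assumes z: "is_sol z"
    and d: "\<And>i. i < m \<Longrightarrow> Gbar g gg z xt w i = 0 \<Longrightarrow> (gg i xt + w i *\<^sub>R (z - xt)) \<bullet> d < 0"
  shows "0 \<le> P1 (z + d) - P1 z + (gf xt - \<xi> + a *\<^sub>R (z - xt)) \<bullet> d"
proof -
  define c where "c = gf xt - \<xi> + a *\<^sub>R (z - xt)"
  have "sfeas z" using z by (simp add: is_sub_sol_def)
  have "eventually (\<lambda>s. \<forall>i\<in>{..<m}. Gbar g gg (z + s *\<^sub>R d) xt w i < 0) (at_right 0)"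
    using \<open>sfeas z\<close> d by (rule eventually_strictly_sub_feas_along)
  then have "eventually (\<lambda>s. 0 \<le> (P1 (z + d) - P1 z + c \<bullet> d) + s * (a / 2 * (norm d)\<^sup>2)) (at_right 0)"
    using eventually_in_unit_interval
  proof eventually_elim
    case (elim s)
    have "sfeas (z + s *\<^sub>R d)" using elim(1) by (auto simp: sub_feas_def less_imp_le)
    then have "\<Phi> z \<le> \<Phi> (z + s *\<^sub>R d)" using z by (auto simp: is_sub_sol_def)
    also have "\<dots> = \<Phi> z + s * (c \<bullet> d) + s * (s * (a / 2 * (norm d)\<^sup>2)) + P1 (z + s *\<^sub>R d) - P1 z"
      using sub_obj_expand[of "z + s *\<^sub>R d" z] by (simp add: c_def algebra_simps power2_eq_square)
    also have "P1 (z + s *\<^sub>R d) \<le> (1 - s) * P1 z + s * P1 (z + d)"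
    proof -
      have "z + s *\<^sub>R d = (1 - s) *\<^sub>R z + s *\<^sub>R (z + d)" by (simp add: algebra_simps)
      then show ?thesis using convex_onD[OF P1_convex, of s z "z + d"] elim(2) by simp
    qed
    finally have "0 \<le> s * ((P1 (z + d) - P1 z + c \<bullet> d) + s * (a / 2 * (norm d)\<^sup>2))"
      by (simp add: algebra_simps)
    then show ?case using elim(2) by (simp add: zero_le_mult_iff)
  qed
  then show ?thesis unfolding c_def by (rule nonneg_if_eventually_nonneg_affine)
qed

text \<open>Perturbing d towards the Slater point makes it strictly feasible for the linearised
  active constraints; letting the perturbation vanish uses continuity of P1.\<close>

lemma sub_obj_dir_nonneg:
  assumes z: "is_sol z" and slater: "\<And>i. i < m \<Longrightarrow> Gbar g gg xh xt w i < 0"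
    and d: "\<And>i. i < m \<Longrightarrow> Gbar g gg z xt w i = 0 \<Longrightarrow> (gg i xt + w i *\<^sub>R (z - xt)) \<bullet> d \<le> 0"
  shows "0 \<le> P1 (z + d) - P1 z + (gf xt - \<xi> + a *\<^sub>R (z - xt)) \<bullet> d"
proof -
  define c where "c = gf xt - \<xi> + a *\<^sub>R (z - xt)"
  define \<phi> where "\<phi> e = P1 (z + (d + e *\<^sub>R (xh - z))) - P1 z + c \<bullet> (d + e *\<^sub>R (xh - z))" for e :: real
  have toward_slater: "(gg i xt + w i *\<^sub>R (z - xt)) \<bullet> (xh - z) < 0"
    if i: "i < m" and act: "Gbar g gg z xt w i = 0" for i
  proof -
    have "0 \<le> w i / 2 * (norm (xh - z))\<^sup>2" using w_pos[OF i] by simp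
    then show ?thesis using Gbar_expand[of xh i z] slater[OF i] act by simp
  qed
  have ev: "eventually (\<lambda>e. 0 \<le> \<phi> e) (at_right 0)"
    using eventually_at_right_less[of 0]
  proof eventually_elim
    case (elim e)
    show ?case unfolding \<phi>_def c_def
    proof (rule sub_obj_dir_nonneg_strict[OF z])
      fix i assume i: "i < m" and act: "Gbar g gg z xt w i = 0"
      have "e * ((gg i xt + w i *\<^sub>R (z - xt)) \<bullet> (xh - z)) < 0"
        using elim toward_slater[OF i act] by (simp add: mult_pos_neg)
      then show "(gg i xt + w i *\<^sub>R (z - xt)) \<bullet> (d + e *\<^sub>R (xh - z)) < 0"
        using d[OF i act] by (simp add: inner_add_right)
    qed
  qed
  have "((\<lambda>e. z + (d + e *\<^sub>R (xh - z))) \<longlongrightarrow> z + (d + 0 *\<^sub>R (xh - z))) (at_right 0)"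
    by (intro tendsto_intros)
  then have "((\<lambda>e. P1 (z + (d + e *\<^sub>R (xh - z)))) \<longlongrightarrow> P1 (z + (d + 0 *\<^sub>R (xh - z)))) (at_right 0)"
    by (rule continuous_on_tendsto_compose[OF P1_continuous]) auto
  then have "(\<phi> \<longlongrightarrow> \<phi> 0) (at_right 0)"
    unfolding \<phi>_def by (intro tendsto_intros) simp_all
  then have "0 \<le> \<phi> 0" by (rule tendsto_lowerbound[OF _ ev]) simp
  then show ?thesis by (simp add: \<phi>_def c_def)
qed

lemma kkt_multipliers_exist:
  assumes z: "is_sol z" and slater: "\<And>i. i < m \<Longrightarrow> Gbar g gg xh xt w i < 0"
  shows "\<exists>lam. (\<forall>i<m. 0 \<le> lam i) \<and> (\<forall>i<m. lam i * Gbar g gg z xt w i = 0) \<and>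
    - (gf xt - \<xi> + a *\<^sub>R (z - xt) + (\<Sum>i<m. lam i *\<^sub>R (gg i xt + w i *\<^sub>R (z - xt)))) \<in> subgrad P1 z"
proof -
  define c where "c = gf xt - \<xi> + a *\<^sub>R (z - xt)"
  define G where "G i = gg i xt + w i *\<^sub>R (z - xt)" for i
  define I where "I = {i \<in> {..<m}. Gbar g gg z xt w i = 0}"
  define \<Delta> where "\<Delta> d = P1 (z + d) - P1 z + c \<bullet> d" for d
  have "convex_on UNIV \<Delta>"
  proof (rule convex_onI)
    fix t :: real and x y :: 'a assume t: "0 < t" "t < 1"
    have "z + ((1 - t) *\<^sub>R x + t *\<^sub>R y) = (1 - t) *\<^sub>R (z + x) + t *\<^sub>R (z + y)" by (simp add: algebra_simps)
    then show "\<Delta> ((1 - t) *\<^sub>R x + t *\<^sub>R y) \<le> (1 - t) * \<Delta> x + t * \<Delta> y"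
      using convex_onD[OF P1_convex, of t "z + x" "z + y"] t
      by (simp add: \<Delta>_def inner_add_right algebra_simps)
  qed simp
  moreover have "convex_cone {d. \<forall>i\<in>I. G i \<bullet> d \<le> 0}"
    by (auto simp: convex_cone_iff inner_add_right intro!: add_nonpos_nonpos mult_nonneg_nonpos)
  moreover have "0 \<le> \<Delta> d" if "\<forall>i\<in>I. G i \<bullet> d \<le> 0" for d
    unfolding \<Delta>_def c_def using that by (intro sub_obj_dir_nonneg[OF z slater]) (auto simp: I_def G_def)
  ultimately obtain \<pi> where \<pi>_polar: "\<And>d. \<forall>i\<in>I. G i \<bullet> d \<le> 0 \<Longrightarrow> \<pi> \<bullet> d \<le> 0"
    and \<pi>_subgrad: "\<And>d. 0 \<le> \<Delta> d + \<pi> \<bullet> d"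
    using convex_nonneg_on_cone_imp_multiplier[of \<Delta> "{d. \<forall>i\<in>I. G i \<bullet> d \<le> 0}"]
    by (auto simp: \<Delta>_def)
  obtain l where l0: "\<forall>i\<in>I. 0 \<le> l i" and \<pi>: "\<pi> = (\<Sum>i\<in>I. l i *\<^sub>R G i)"
    using farkas_finite_cone[of I G \<pi>] \<pi>_polar by (auto simp: I_def inner_commute)
  define lam where "lam i = (if i \<in> I then l i else 0)" for i
  have "(\<Sum>i<m. lam i *\<^sub>R G i) = (\<Sum>i<m. if Gbar g gg z xt w i = 0 then l i *\<^sub>R G i else 0)"
    by (intro sum.cong) (auto simp: lam_def I_def)
  also have "\<dots> = (\<Sum>i\<in>I. l i *\<^sub>R G i)"
    unfolding I_def by (rule sum.inter_filter[symmetric]) simp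
  finally have "(\<Sum>i<m. lam i *\<^sub>R G i) = \<pi>" using \<pi> by simp
  moreover have "P1 z + (- (c + \<pi>)) \<bullet> (y - z) \<le> P1 y" for y
    using \<pi>_subgrad[of "y - z"] by (simp add: \<Delta>_def inner_add_left inner_diff_left)
  ultimately show ?thesis using l0
    by (intro exI[of _ lam]) (auto simp: subgrad_def lam_def I_def c_def G_def)
qed


lemma sum_Gbar_eq:
  "(\<Sum>i<m. lam i * Gbar g gg x xt w i)
   = (\<Sum>i<m. lam i * (g i xt + gg i xt \<bullet> (x - xt))) + (\<Sum>i<m. lam i * w i) / 2 * (norm (x - xt))\<^sup>2"
proof -
  have "(\<Sum>i<m. lam i * Gbar g gg x xt w i)
      = (\<Sum>i<m. lam i * (g i xt + gg i xt \<bullet> (x - xt)) + lam i * w i / 2 * (norm (x - xt))\<^sup>2)"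
    by (intro sum.cong) (auto simp: Gbar_def algebra_simps)
  then show ?thesis by (simp add: sum.distrib sum_distrib_right sum_divide_distrib)
qed

lemma sum_Gbar_expand:
  "(\<Sum>i<m. lam i * Gbar g gg x xt w i)
   = (\<Sum>i<m. lam i * Gbar g gg z xt w i) + (\<Sum>i<m. lam i *\<^sub>R (gg i xt + w i *\<^sub>R (z - xt))) \<bullet> (x - z)
     + (\<Sum>i<m. lam i * w i) / 2 * (norm (x - z))\<^sup>2"
proof -
  have "(\<Sum>i<m. lam i * Gbar g gg x xt w i)
      = (\<Sum>i<m. lam i * Gbar g gg z xt w i + lam i * ((gg i xt + w i *\<^sub>R (z - xt)) \<bullet> (x - z))
           + lam i * w i / 2 * (norm (x - z))\<^sup>2)"
    by (intro sum.cong refl) (subst Gbar_expand[of x _ z], simp add: algebra_simps)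
  then show ?thesis by (simp add: sum.distrib sum_distrib_right sum_divide_distrib inner_sum_left)
qed

lemma Fval_le_sub_obj:
  fixes f P2 :: "'a \<Rightarrow> real"
  assumes fd: "\<And>x. (f has_derivative (\<lambda>h. gf x \<bullet> h)) (at x)" and lip: "Lf-lipschitz_on UNIV gf"
    and \<xi>: "\<xi> \<in> subgrad P2 xt"
  shows "Fval f P1 P2 z \<le> f xt - P2 xt + \<Phi> z - (a - Lf) / 2 * (norm (z - xt))\<^sup>2"
proof -
  have "f z \<le> f xt + gf xt \<bullet> (z - xt) + Lf / 2 * (norm (z - xt))\<^sup>2" by (rule descent_lemma[OF fd lip])
  moreover have "P2 xt + \<xi> \<bullet> (z - xt) \<le> P2 z" using \<xi> by (simp add: subgrad_def)
  ultimately show ?thesis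
    by (simp add: Fval_def sub_obj_def inner_diff_left left_diff_distrib diff_divide_distrib)
qed

lemma lagrangian_growth:
  assumes compl: "\<forall>i<m. lam i * Gbar g gg z xt w i = 0"
    and sg: "- (gf xt - \<xi> + a *\<^sub>R (z - xt) + (\<Sum>i<m. lam i *\<^sub>R (gg i xt + w i *\<^sub>R (z - xt))))
               \<in> subgrad P1 z"
  defines "Lfg \<equiv> a + (\<Sum>i<m. lam i * w i)"
  shows "\<Phi> z + Lfg / 2 * (norm (x - z))\<^sup>2 \<le> \<Phi> x + (\<Sum>i<m. lam i * Gbar g gg x xt w i)"
proof -
  define V where "V = gf xt - \<xi> + a *\<^sub>R (z - xt) + (\<Sum>i<m. lam i *\<^sub>R (gg i xt + w i *\<^sub>R (z - xt)))"
  have "(\<Sum>i<m. lam i * Gbar g gg z xt w i) = 0" using compl by (intro sum.neutral) simp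
  then have "\<Phi> x + (\<Sum>i<m. lam i * Gbar g gg x xt w i)
      = \<Phi> z + V \<bullet> (x - z) + Lfg / 2 * (norm (x - z))\<^sup>2 + P1 x - P1 z"
    unfolding sum_Gbar_expand[of lam x z] sub_obj_expand[of x z] V_def Lfg_def
    by (simp add: inner_add_left algebra_simps add_divide_distrib)
  moreover have "P1 z + (- V) \<bullet> (x - z) \<le> P1 x" using sg by (simp add: subgrad_def V_def)
  ultimately show ?thesis by simp
qed

lemma Fval_le_lagrangian_model:
  fixes f P2 :: "'a \<Rightarrow> real"
  assumes fd: "\<And>x. (f has_derivative (\<lambda>h. gf x \<bullet> h)) (at x)" and lip: "Lf-lipschitz_on UNIV gf"
    and \<xi>: "\<xi> \<in> subgrad P2 xt"
    and compl: "\<forall>i<m. lam i * Gbar g gg z xt w i = 0"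
    and sg: "- (gf xt - \<xi> + a *\<^sub>R (z - xt) + (\<Sum>i<m. lam i *\<^sub>R (gg i xt + w i *\<^sub>R (z - xt))))
               \<in> subgrad P1 z"
  defines "Lfg \<equiv> a + (\<Sum>i<m. lam i * w i)"
  shows "Fval f P1 P2 z
         \<le> f xt + (gf xt - \<xi>) \<bullet> (x - xt) + Lfg / 2 * (norm (x - xt))\<^sup>2 + P1 x - P2 xt
           + (\<Sum>i<m. lam i * (g i xt + gg i xt \<bullet> (x - xt)))
           - Lfg / 2 * (norm (x - z))\<^sup>2 - (a - Lf) / 2 * (norm (z - xt))\<^sup>2"
proof -
  have "Fval f P1 P2 z \<le> f xt - P2 xt + \<Phi> z - (a - Lf) / 2 * (norm (z - xt))\<^sup>2"
    by (rule Fval_le_sub_obj[OF fd lip \<xi>])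
  also have "\<dots> \<le> f xt - P2 xt + (\<Phi> x + (\<Sum>i<m. lam i * Gbar g gg x xt w i))
                 - Lfg / 2 * (norm (x - z))\<^sup>2 - (a - Lf) / 2 * (norm (z - xt))\<^sup>2"
    using lagrangian_growth[OF compl sg, of x] by (simp add: Lfg_def)
  also have "\<dots> = f xt + (gf xt - \<xi>) \<bullet> (x - xt) + Lfg / 2 * (norm (x - xt))\<^sup>2 + P1 x - P2 xt
        + (\<Sum>i<m. lam i * (g i xt + gg i xt \<bullet> (x - xt)))
        - Lfg / 2 * (norm (x - z))\<^sup>2 - (a - Lf) / 2 * (norm (z - xt))\<^sup>2"
    unfolding sum_Gbar_eq sub_obj_def Lfg_def by (simp add: algebra_simps add_divide_distrib)
  finally show ?thesis .
qed

lemma sub_sol_kkt_bound: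
  fixes f P2 :: "'a \<Rightarrow> real"
  assumes z: "is_sol z" and xt: "feas m g xt" and mfcq: "\<exists>d. \<forall>i<m. g i xt = 0 \<longrightarrow> gg i xt \<bullet> d < 0"
    and fd: "\<And>x. (f has_derivative (\<lambda>h. gf x \<bullet> h)) (at x)" and lip: "Lf-lipschitz_on UNIV gf"
    and \<xi>: "\<xi> \<in> subgrad P2 xt"
  shows "\<exists>lam :: nat \<Rightarrow> real.
          (\<forall>i<m. lam i \<ge> 0)
          \<and> (\<forall>x. sub_obj gf P1 xt \<xi> a z + (\<Sum>i<m. lam i * Gbar g gg z xt w i)
                 \<le> sub_obj gf P1 xt \<xi> a x + (\<Sum>i<m. lam i * Gbar g gg x xt w i))
          \<and> (\<forall>i<m. lam i * (g i xt + gg i xt \<bullet> (z - xt) + w i / 2 * (norm (z - xt))\<^sup>2) = 0)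
          \<and> (let Lfg = a + (\<Sum>i<m. lam i * w i) in
              0 \<in> (\<lambda>v. gf xt - \<xi> + Lfg *\<^sub>R (z - xt) + v + (\<Sum>i<m. lam i *\<^sub>R gg i xt)) ` subgrad P1 z
              \<and> (feas m g z \<longrightarrow>
                  (\<forall>x. Fval f P1 P2 z
                       \<le> f xt + (gf xt - \<xi>) \<bullet> (x - xt)
                         + Lfg / 2 * (norm (x - xt))\<^sup>2 + P1 x - P2 xt
                         + (\<Sum>i<m. lam i * (g i xt + gg i xt \<bullet> (x - xt)))
                         - Lfg / 2 * (norm (x - z))\<^sup>2
                         - (a - Lf) / 2 * (norm (z - xt))\<^sup>2)))"
proof -
  obtain xh where slater: "\<And>i. i < m \<Longrightarrow> Gbar g gg xh xt w i < 0"
    using slater_point_exists xt mfcq by (metis feas_def)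
  obtain lam where lam0: "\<forall>i<m. 0 \<le> lam i" and compl: "\<forall>i<m. lam i * Gbar g gg z xt w i = 0"
    and sg: "- (gf xt - \<xi> + a *\<^sub>R (z - xt) + (\<Sum>i<m. lam i *\<^sub>R (gg i xt + w i *\<^sub>R (z - xt))))
               \<in> subgrad P1 z"
    using kkt_multipliers_exist[OF z slater] by blast
  define Lfg where "Lfg = a + (\<Sum>i<m. lam i * w i)"
  have "(\<Sum>i<m. lam i *\<^sub>R (gg i xt + w i *\<^sub>R (z - xt)))
      = (\<Sum>i<m. lam i *\<^sub>R gg i xt) + (\<Sum>i<m. lam i * w i) *\<^sub>R (z - xt)"
    by (simp add: scaleR_add_right sum.distrib scaleR_sum_left)
  then have "0 \<in> (\<lambda>v. gf xt - \<xi> + Lfg *\<^sub>R (z - xt) + v + (\<Sum>i<m. lam i *\<^sub>R gg i xt)) ` subgrad P1 z"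
    by (intro image_eqI[OF _ sg]) (simp add: Lfg_def algebra_simps)
  moreover have "\<Phi> z + (\<Sum>i<m. lam i * Gbar g gg z xt w i) \<le> \<Phi> x + (\<Sum>i<m. lam i * Gbar g gg x xt w i)" for x
  proof -
    have "0 \<le> Lfg" unfolding Lfg_def using a_pos lam0 w_pos
      by (intro add_nonneg_nonneg sum_nonneg) (auto simp: less_imp_le)
    then have "0 \<le> Lfg / 2 * (norm (x - z))\<^sup>2" by simp
    moreover have "(\<Sum>i<m. lam i * Gbar g gg z xt w i) = 0" using compl by (intro sum.neutral) simp
    ultimately show ?thesis using lagrangian_growth[OF compl sg, of x] by (simp add: Lfg_def)
  qed
  ultimately show ?thesis using lam0 compl Fval_le_lagrangian_model[OF fd lip \<xi> compl sg]
    by (intro exI[of _ lam]) (simp add: Lfg_def[symmetric] Let_def Gbar_def)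
qed

lemma sufficient_decrease_if_Lf_large:
  fixes f P2 :: "'a \<Rightarrow> real"
  assumes z: "is_sol z" and xt: "\<And>i. i < m \<Longrightarrow> g i xt \<le> 0"
    and fd: "\<And>x. (f has_derivative (\<lambda>h. gf x \<bullet> h)) (at x)" and lip: "Lf-lipschitz_on UNIV gf"
    and \<xi>: "\<xi> \<in> subgrad P2 xt" and c: "0 \<le> c" and large: "Lf + c \<le> a"
  shows "Fval f P1 P2 z \<le> Fval f P1 P2 xt - c / 2 * (norm (z - xt))\<^sup>2"
proof -
  have "0 \<le> Lf" using lip by (rule lipschitz_on_nonneg)
  have "sfeas xt" using xt by (simp add: sub_feas_def Gbar_def)
  then have "\<Phi> z + a / 2 * (norm (xt - z))\<^sup>2 \<le> P1 xt"
    using sub_obj_growth[OF z \<open>sfeas xt\<close>] by (simp add: sub_obj_def)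
  moreover have "Fval f P1 P2 z \<le> f xt - P2 xt + \<Phi> z - (a - Lf) / 2 * (norm (z - xt))\<^sup>2"
    by (rule Fval_le_sub_obj[OF fd lip \<xi>])
  moreover have "c / 2 * (norm (z - xt))\<^sup>2 \<le> (a - Lf / 2) * (norm (z - xt))\<^sup>2"
    using large \<open>0 \<le> Lf\<close> c by (intro mult_right_mono) auto
  ultimately show ?thesis
    by (simp add: Fval_def norm_minus_commute left_diff_distrib diff_divide_distrib)
qed

lemma feas_if_Lg_large:
  fixes Lg :: "nat \<Rightarrow> real"
  assumes z: "is_sol z"
    and gd: "\<And>i x. i < m \<Longrightarrow> (g i has_derivative (\<lambda>h. gg i x \<bullet> h)) (at x)"
    and glip: "\<And>i. i < m \<Longrightarrow> (Lg i)-lipschitz_on UNIV (gg i)"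
    and large: "\<And>i. i < m \<Longrightarrow> Lg i \<le> w i"
  shows "feas m g z"
  unfolding feas_def
proof (intro allI impI)
  fix i assume i: "i < m"
  have "g i z \<le> g i xt + gg i xt \<bullet> (z - xt) + Lg i / 2 * (norm (z - xt))\<^sup>2"
    by (rule descent_lemma[OF gd[OF i] glip[OF i]])
  also have "\<dots> \<le> Gbar g gg z xt w i" unfolding Gbar_def
    using large[OF i] by (intro add_left_mono mult_right_mono) auto
  also have "\<dots> \<le> 0" using z i by (auto simp: is_sub_sol_def sub_feas_def)
  finally show "g i z \<le> 0" .
qed

end

section \<open>The line search\<close>

lemma trials_0 [simp]: "trials m f gf g gg P1 P2 c \<tau> xt \<xi> LL0 0 = LL0"
  by (simp add: trials_def)

lemma trials_Suc [simp]:
  "trials m f gf g gg P1 P2 c \<tau> xt \<xi> LL0 (Suc k)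
   = trial_step m f gf g gg P1 P2 c \<tau> xt \<xi> (trials m f gf g gg P1 P2 c \<tau> xt \<xi> LL0 k)"
  by (simp add: trials_def)

lemma trials_bounds:
  fixes Lmin Lmax \<tau> :: real
  assumes tau: "1 < \<tau>" and Lmin: "0 < Lmin"
    and L0: "Lmin \<le> fst LL0" "fst LL0 \<le> Lmax" "\<And>i. i < m \<Longrightarrow> Lmin \<le> snd LL0 i \<and> snd LL0 i \<le> Lmax"
  shows "Lmin \<le> fst (trials m f gf g gg P1 P2 c \<tau> xt \<xi> LL0 k)
         \<and> fst (trials m f gf g gg P1 P2 c \<tau> xt \<xi> LL0 k) \<le> Lmax * \<tau> ^ k
         \<and> (\<forall>i<m. Lmin \<le> snd (trials m f gf g gg P1 P2 c \<tau> xt \<xi> LL0 k) i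
                 \<and> snd (trials m f gf g gg P1 P2 c \<tau> xt \<xi> LL0 k) i \<le> Lmax * \<tau> ^ k)"
proof (induction k)
  case 0
  then show ?case using L0 by simp
next
  case (Suc k)
  define LL where "LL = trials m f gf g gg P1 P2 c \<tau> xt \<xi> LL0 k"
  have up: "\<tau> * x \<le> Lmax * \<tau> ^ Suc k" if "x \<le> Lmax * \<tau> ^ k" for x
    using mult_left_mono[OF that, of \<tau>] tau by (simp add: algebra_simps)
  have lo: "Lmin \<le> \<tau> * x" if "Lmin \<le> x" for x
  proof -
    have "1 * x \<le> \<tau> * x" using that tau Lmin by (intro mult_right_mono) auto
    then show ?thesis using that by simp
  qed
  have mono: "Lmax * \<tau> ^ k \<le> Lmax * \<tau> ^ Suc k"
    using L0 Lmin tau by (intro mult_left_mono) auto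
  have "trial_step m f gf g gg P1 P2 c \<tau> xt \<xi> LL \<in> {(fst LL, \<lambda>i. \<tau> * snd LL i), LL, (\<tau> * fst LL, snd LL)}"
    unfolding trial_step_def Let_def by auto
  then show ?case using Suc.IH up lo mono unfolding trials_Suc LL_def[symmetric]
    by (auto intro: order_trans)
qed

locale scp_ls =
  fixes m :: nat and f :: "'a::euclidean_space \<Rightarrow> real" and gf :: "'a \<Rightarrow> 'a"
    and g :: "nat \<Rightarrow> 'a \<Rightarrow> real" and gg :: "nat \<Rightarrow> 'a \<Rightarrow> 'a" and P1 P2 :: "'a \<Rightarrow> real"
    and Lf c \<tau> :: real
  assumes f_grad: "\<And>x. (f has_derivative (\<lambda>h. gf x \<bullet> h)) (at x)"
    and f_lip: "Lf-lipschitz_on UNIV gf"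
    and P1_convex: "convex_on UNIV P1"
    and g_grad: "\<And>i x. i < m \<Longrightarrow> (g i has_derivative (\<lambda>h. gg i x \<bullet> h)) (at x)"
    and gg_lip: "\<And>i. i < m \<Longrightarrow> \<exists>L. L-lipschitz_on UNIV (gg i)"
    and mfcq: "\<And>x. feas m g x \<Longrightarrow> \<exists>d. \<forall>i<m. g i x = 0 \<longrightarrow> gg i x \<bullet> d < 0"
    and c_pos: "0 < c" and tau: "1 < \<tau>"
begin

abbreviation "trial xt \<xi> LL0 \<equiv> trials m f gf g gg P1 P2 c \<tau> xt \<xi> LL0"
abbreviation "acc xt \<xi> \<equiv> accepted m f gf g gg P1 P2 c xt \<xi>"

lemma trial_pair_subproblem:
  assumes "0 < fst LL" "\<And>i. i < m \<Longrightarrow> 0 < snd LL i"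
  shows "scp_subproblem m P1 (fst LL) (snd LL)"
  using P1_convex assms by unfold_locales

lemma trial_sub_sol_unique:
  assumes "feas m g xt" "0 < fst LL" "\<And>i. i < m \<Longrightarrow> 0 < snd LL i"
  shows "\<exists>!z. is_sub_sol m gf g gg P1 xt \<xi> (fst LL) (snd LL) z"
proof -
  interpret S: scp_subproblem m gf g gg P1 xt \<xi> "fst LL" "snd LL"
    using assms(2,3) by (rule trial_pair_subproblem)
  show ?thesis
    using assms(1) by (intro S.sub_sol_unique_existence[of xt]) (simp add: sub_feas_def Gbar_def feas_def)
qed

lemma trial_sol_is_sub_sol:
  assumes "feas m g xt" "0 < fst LL" "\<And>i. i < m \<Longrightarrow> 0 < snd LL i"
  shows "is_sub_sol m gf g gg P1 xt \<xi> (fst LL) (snd LL) (sub_sol m gf g gg P1 xt \<xi> (fst LL) (snd LL))"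
  unfolding sub_sol_def by (rule theI'[OF trial_sub_sol_unique[OF assms]])

lemma rejected_trial_step:
  assumes xt: "feas m g xt" and \<xi>: "\<xi> \<in> subgrad P2 xt"
    and pos: "0 < fst LL" "\<And>i. i < m \<Longrightarrow> 0 < snd LL i"
    and glip: "\<And>i. i < m \<Longrightarrow> (Lg i)-lipschitz_on UNIV (gg i)"
    and rej: "\<not> acc xt \<xi> LL"
  shows "(\<exists>i<m. snd LL i < Lg i) \<and> trial_step m f gf g gg P1 P2 c \<tau> xt \<xi> LL = (fst LL, \<lambda>i. \<tau> * snd LL i)
         \<or> fst LL < Lf + c \<and> trial_step m f gf g gg P1 P2 c \<tau> xt \<xi> LL = (\<tau> * fst LL, snd LL)"
proof -
  interpret S: scp_subproblem m gf g gg P1 xt \<xi> "fst LL" "snd LL"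
    using pos by (rule trial_pair_subproblem)
  define z where "z = sub_sol m gf g gg P1 xt \<xi> (fst LL) (snd LL)"
  have z: "S.is_sol z" unfolding z_def using xt pos by (rule trial_sol_is_sub_sol)
  show ?thesis
  proof (cases "feas m g z")
    case False
    then have "\<exists>i<m. snd LL i < Lg i"
      using S.feas_if_Lg_large[OF z g_grad glip] by (meson not_le)
    with False show ?thesis by (simp add: trial_step_def Let_def z_def[symmetric])
  next
    case True
    with rej have no_decrease: "\<not> Fval f P1 P2 z \<le> Fval f P1 P2 xt - c / 2 * (norm (z - xt))\<^sup>2"
      by (simp add: accepted_def Let_def z_def[symmetric])
    have "fst LL < Lf + c"
    proof (rule ccontr)
      assume "\<not> fst LL < Lf + c"
      then have "Fval f P1 P2 z \<le> Fval f P1 P2 xt - c / 2 * (norm (z - xt))\<^sup>2"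
        using S.sufficient_decrease_if_Lf_large[OF z _ f_grad f_lip \<xi>, of c] c_pos xt
        by (simp add: feas_def)
      with no_decrease show False ..
    qed
    with True no_decrease show ?thesis by (simp add: trial_step_def Let_def z_def[symmetric])
  qed
qed

lemma rejected_trial_exponents:
  assumes xt: "feas m g xt" and \<xi>: "\<xi> \<in> subgrad P2 xt" and Lmin: "0 < Lmin"
    and L0: "Lmin \<le> fst LL0" "\<And>i. i < m \<Longrightarrow> Lmin \<le> snd LL0 i"
    and glip: "\<And>i. i < m \<Longrightarrow> (Lg i)-lipschitz_on UNIV (gg i)"
    and Nf: "Lf + c \<le> Lmin * \<tau> ^ Nf" and Ng: "\<And>i. i < m \<Longrightarrow> Lg i \<le> Lmin * \<tau> ^ Ng"
    and pq: "p \<le> Nf" "q \<le> Ng"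
    and rej: "\<not> acc xt \<xi> (fst LL0 * \<tau> ^ p, \<lambda>i. snd LL0 i * \<tau> ^ q)"
  shows "\<exists>p'\<le>Nf. \<exists>q'\<le>Ng. p' + q' = Suc (p + q)
           \<and> trial_step m f gf g gg P1 P2 c \<tau> xt \<xi> (fst LL0 * \<tau> ^ p, \<lambda>i. snd LL0 i * \<tau> ^ q)
             = (fst LL0 * \<tau> ^ p', \<lambda>i. snd LL0 i * \<tau> ^ q')"
proof -
  define LL where "LL = (fst LL0 * \<tau> ^ p, \<lambda>i. snd LL0 i * \<tau> ^ q)"
  have grow: "Lmin * \<tau> ^ n \<le> x * \<tau> ^ n" if "Lmin \<le> x" for x n
    using that tau by (intro mult_right_mono) auto
  have "0 < fst LL0" "\<And>i. i < m \<Longrightarrow> 0 < snd LL0 i" using L0 Lmin by (auto intro: less_le_trans)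
  then have pos: "0 < fst LL" "\<And>i. i < m \<Longrightarrow> 0 < snd LL i"
    unfolding LL_def using tau by (auto intro!: mult_pos_pos)
  have "(\<exists>i<m. snd LL i < Lg i) \<and> trial_step m f gf g gg P1 P2 c \<tau> xt \<xi> LL = (fst LL, \<lambda>i. \<tau> * snd LL i)
        \<or> fst LL < Lf + c \<and> trial_step m f gf g gg P1 P2 c \<tau> xt \<xi> LL = (\<tau> * fst LL, snd LL)"
    using rejected_trial_step[OF xt \<xi> pos(1) pos(2) glip] rej unfolding LL_def by blast
  then show ?thesis
  proof (elim disjE conjE exE)
    fix i assume i: "i < m" and small: "snd LL i < Lg i"
      and step: "trial_step m f gf g gg P1 P2 c \<tau> xt \<xi> LL = (fst LL, \<lambda>i. \<tau> * snd LL i)"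
    have "snd LL0 i * \<tau> ^ q < snd LL0 i * \<tau> ^ Ng"
      using small Ng[OF i] grow[OF L0(2)[OF i], of Ng] by (simp add: LL_def)
    then have "q < Ng" using tau L0(2)[OF i] Lmin by (simp add: power_less_imp_less_exp)
    then show ?thesis using pq step
      by (intro exI[of _ p] exI[of _ "Suc q"]) (auto simp: LL_def algebra_simps)
  next
    assume small: "fst LL < Lf + c"
      and step: "trial_step m f gf g gg P1 P2 c \<tau> xt \<xi> LL = (\<tau> * fst LL, snd LL)"
    have "fst LL0 * \<tau> ^ p < fst LL0 * \<tau> ^ Nf"
      using small Nf grow[OF L0(1), of Nf] by (simp add: LL_def)
    then have "p < Nf" using tau L0(1) Lmin by (simp add: power_less_imp_less_exp)
    then show ?thesis using pq step
      by (intro exI[of _ "Suc p"] exI[of _ q]) (auto simp: LL_def algebra_simps)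
  qed
qed

text \<open>Each rejection raises the exponent of one entry of the trial pair, and only while that
  entry is below its threshold; so the exponents never exceed Nf and Ng.\<close>

lemma trials_accepted_within:
  assumes xt: "feas m g xt" and \<xi>: "\<xi> \<in> subgrad P2 xt" and Lmin: "0 < Lmin"
    and L0: "Lmin \<le> fst LL0" "\<And>i. i < m \<Longrightarrow> Lmin \<le> snd LL0 i"
    and glip: "\<And>i. i < m \<Longrightarrow> (Lg i)-lipschitz_on UNIV (gg i)"
    and Nf: "Lf + c \<le> Lmin * \<tau> ^ Nf" and Ng: "\<And>i. i < m \<Longrightarrow> Lg i \<le> Lmin * \<tau> ^ Ng"
  shows "\<exists>k \<le> Nf + Ng. acc xt \<xi> (trial xt \<xi> LL0 k)"
proof (rule ccontr)
  assume none: "\<not> ?thesis"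
  have "\<exists>p\<le>Nf. \<exists>q\<le>Ng. p + q = k \<and> trial xt \<xi> LL0 k = (fst LL0 * \<tau> ^ p, \<lambda>i. snd LL0 i * \<tau> ^ q)"
    if "k \<le> Nf + Ng + 1" for k
    using that
  proof (induction k)
    case 0
    then show ?case by simp
  next
    case (Suc k)
    then obtain p q where pq: "p \<le> Nf" "q \<le> Ng" "p + q = k"
      and Tk: "trial xt \<xi> LL0 k = (fst LL0 * \<tau> ^ p, \<lambda>i. snd LL0 i * \<tau> ^ q)" by auto
    have "\<not> acc xt \<xi> (fst LL0 * \<tau> ^ p, \<lambda>i. snd LL0 i * \<tau> ^ q)"
      using none Suc.prems Tk by (metis Suc_eq_plus1 Suc_le_mono)
    from rejected_trial_exponents[OF xt \<xi> Lmin L0 glip Nf Ng pq(1,2) this]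
    show ?case using pq(3) Tk by simp
  qed
  from this[of "Nf + Ng + 1"] show False by auto
qed

lemma inner_loop_terminates:
  assumes Lmin: "0 < Lmin"
  shows "\<exists>k0. \<forall>xt \<xi> LL0. feas m g xt \<longrightarrow> \<xi> \<in> subgrad P2 xt \<longrightarrow> Lmin \<le> fst LL0
           \<longrightarrow> (\<forall>i<m. Lmin \<le> snd LL0 i) \<longrightarrow> (\<exists>k<k0. acc xt \<xi> (trial xt \<xi> LL0 k))"
proof -
  obtain Lg where glip: "\<And>i. i < m \<Longrightarrow> (Lg i)-lipschitz_on UNIV (gg i)" using gg_lip by metis
  obtain Nf where "(Lf + c) / Lmin < \<tau> ^ Nf" using real_arch_pow[OF tau] by blast
  then have Nf: "Lf + c \<le> Lmin * \<tau> ^ Nf" using Lmin by (simp add: pos_divide_less_eq mult.commute)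
  obtain Ng where "(\<Sum>i<m. \<bar>Lg i\<bar>) / Lmin < \<tau> ^ Ng" using real_arch_pow[OF tau] by blast
  then have "(\<Sum>i<m. \<bar>Lg i\<bar>) \<le> Lmin * \<tau> ^ Ng" using Lmin by (simp add: pos_divide_less_eq mult.commute)
  then have Ng: "Lg i \<le> Lmin * \<tau> ^ Ng" if "i < m" for i
    using member_le_sum[of i "{..<m}" "\<lambda>i. \<bar>Lg i\<bar>"] that by auto
  have "\<exists>k<Nf + Ng + 1. acc xt \<xi> (trial xt \<xi> LL0 k)"
    if H: "feas m g xt" "\<xi> \<in> subgrad P2 xt" "Lmin \<le> fst LL0" "\<forall>i<m. Lmin \<le> snd LL0 i" for xt \<xi> LL0
  proof -
    obtain k where "k \<le> Nf + Ng" "acc xt \<xi> (trial xt \<xi> LL0 k)"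
      using trials_accepted_within[OF H(1,2) Lmin H(3) _ glip Nf Ng] H(4) by blast
    then show ?thesis by (intro exI[of _ k] conjI) auto
  qed
  then show ?thesis by blast
qed

end

locale scp_ls_run = scp_ls +
  fixes x0 :: 'a and xisel :: "nat \<Rightarrow> 'a \<Rightarrow> 'a" and Lf0 :: "nat \<Rightarrow> real"
    and Lg0 :: "nat \<Rightarrow> nat \<Rightarrow> real" and Lmin Lmax :: real
  assumes x0_feas: "feas m g x0" and xisel: "\<And>t x. xisel t x \<in> subgrad P2 x"
    and Lmin_pos: "0 < Lmin"
    and Lf0: "\<And>t. Lmin \<le> Lf0 t \<and> Lf0 t \<le> Lmax"
    and Lg0: "\<And>t i. i < m \<Longrightarrow> Lmin \<le> Lg0 t i \<and> Lg0 t i \<le> Lmax"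
begin

abbreviation "iterate \<equiv> scp_x m f gf g gg P1 P2 c \<tau> x0 xisel Lf0 Lg0"
abbreviation "trial_at t \<equiv> trial (iterate t) (xisel t (iterate t)) (Lf0 t, Lg0 t)"
abbreviation "acc_at t \<equiv> acc (iterate t) (xisel t (iterate t))"
abbreviation "acc_idx t \<equiv> acc_index m f gf g gg P1 P2 c \<tau> (iterate t) (xisel t (iterate t)) (Lf0 t, Lg0 t)"

lemma trial_at_bounds:
  "Lmin \<le> fst (trial_at t k) \<and> fst (trial_at t k) \<le> Lmax * \<tau> ^ k
   \<and> (\<forall>i<m. Lmin \<le> snd (trial_at t k) i \<and> snd (trial_at t k) i \<le> Lmax * \<tau> ^ k)"
  using Lf0[of t] Lg0[of _ t] by (intro trials_bounds[OF tau Lmin_pos]) auto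

lemma trial_at_pos: "0 < fst (trial_at t k)" "i < m \<Longrightarrow> 0 < snd (trial_at t k) i"
  using trial_at_bounds[of t k] Lmin_pos by auto

lemma trial_at_subproblem:
  "scp_subproblem m P1 (fst (trial_at t k)) (snd (trial_at t k))"
  using trial_at_pos by (rule trial_pair_subproblem)

lemma inner_loop_bounded_and_feasible:
  "\<exists>k0\<ge>1. \<forall>t. feas m g (iterate t) \<and> (\<exists>k<k0. acc_at t (trial_at t k)) \<and> acc_idx t < k0"
proof -
  obtain k0 where k0_all: "\<forall>xt \<xi> LL0. feas m g xt \<longrightarrow> \<xi> \<in> subgrad P2 xt \<longrightarrow> Lmin \<le> fst LL0
      \<longrightarrow> (\<forall>i<m. Lmin \<le> snd LL0 i) \<longrightarrow> (\<exists>k<k0. acc xt \<xi> (trial xt \<xi> LL0 k))"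
    using inner_loop_terminates[OF Lmin_pos] by blast
  have k0: "\<exists>k<k0. acc_at t (trial_at t k)" if "feas m g (iterate t)" for t
    using k0_all[rule_format, of "iterate t" "xisel t (iterate t)" "(Lf0 t, Lg0 t)"] that xisel Lf0 Lg0
    by simp
  have acc: "acc_at t (trial_at t (acc_idx t)) \<and> acc_idx t < k0" if F: "feas m g (iterate t)" for t
  proof -
    obtain k where k: "k < k0" "acc_at t (trial_at t k)" using k0[OF F] by blast
    have "acc_at t (trial_at t (acc_idx t))" unfolding acc_index_def by (rule LeastI[of _ k]) (rule k(2))
    moreover have "acc_idx t \<le> k" unfolding acc_index_def by (rule Least_le) (rule k(2))
    ultimately show ?thesis using k(1) by simp
  qed
  have feas: "feas m g (iterate t)" for t
  proof (induction t)
    case 0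
    then show ?case using x0_feas by simp
  next
    case (Suc t)
    then show ?case using acc[OF Suc.IH] by (simp add: accepted_def Let_def)
  qed
  moreover have "1 \<le> k0" using k0[OF feas[of 0]] by auto
  ultimately show ?thesis using acc k0 by blast
qed

lemma iterate_feasible: "feas m g (iterate t)"
proof -
  obtain k0 where "\<forall>t. feas m g (iterate t) \<and> (\<exists>k<k0. acc_at t (trial_at t k)) \<and> acc_idx t < k0"
    using inner_loop_bounded_and_feasible by blast
  then show ?thesis by blast
qed

lemma trial_at_R_pos:
  assumes "i < m"
  shows "0 < (norm (gg i (iterate t) /\<^sub>R snd (trial_at t k) i))\<^sup>2 - 2 / snd (trial_at t k) i * g i (iterate t)"
proof (rule norm_scaleR_sq_minus_pos)
  show "g i (iterate t) \<le> 0" using iterate_feasible assms by (simp add: feas_def)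
  show "0 < snd (trial_at t k) i" using trial_at_pos assms by blast
  assume "g i (iterate t) = 0"
  then show "gg i (iterate t) \<noteq> 0" using mfcq[OF iterate_feasible] assms by fastforce
qed

lemma accepted_pairs_bounded:
  "\<exists>B. \<forall>t. \<bar>fst (trial_at t (acc_idx t))\<bar> \<le> B \<and> (\<forall>i<m. \<bar>snd (trial_at t (acc_idx t)) i\<bar> \<le> B)"
proof -
  obtain k0 where k0: "\<And>t. acc_idx t < k0" using inner_loop_bounded_and_feasible by blast
  have pw: "Lmax * \<tau> ^ acc_idx t \<le> Lmax * \<tau> ^ k0" for t
    using k0[of t] tau Lmin_pos Lf0[of 0] by (intro mult_left_mono power_increasing) auto
  show ?thesis
  proof (intro exI[of _ "Lmax * \<tau> ^ k0"] allI conjI impI)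
    fix t
    show "\<bar>fst (trial_at t (acc_idx t))\<bar> \<le> Lmax * \<tau> ^ k0"
      using trial_at_bounds[of t "acc_idx t"] pw[of t] Lmin_pos by auto
    fix i assume "i < m"
    then show "\<bar>snd (trial_at t (acc_idx t)) i\<bar> \<le> Lmax * \<tau> ^ k0"
      using trial_at_bounds[of t "acc_idx t"] pw[of t] Lmin_pos by fastforce
  qed
qed

end

theorem mainTheorem1:
  fixes m :: nat
    and f P1 P2 :: "'a::euclidean_space \<Rightarrow> real"
    and gf :: "'a \<Rightarrow> 'a"
    and g :: "nat \<Rightarrow> 'a \<Rightarrow> real"
    and gg :: "nat \<Rightarrow> 'a \<Rightarrow> 'a"
    and Lf c Lmin Lmax \<tau> :: real
    and x0 :: 'a
    and xisel :: "nat \<Rightarrow> 'a \<Rightarrow> 'a"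
    and Lf0 :: "nat \<Rightarrow> real"
    and Lg0 :: "nat \<Rightarrow> nat \<Rightarrow> real"
    and X :: "nat \<Rightarrow> 'a"
    and LT :: "nat \<Rightarrow> nat \<Rightarrow> real \<times> (nat \<Rightarrow> real)"
    and K :: "nat \<Rightarrow> nat"
    and Z :: "nat \<Rightarrow> nat \<Rightarrow> 'a"
  assumes f_grad: "\<And>x. (f has_derivative (\<lambda>h. gf x \<bullet> h)) (at x)"
    and P1_convex: "convex_on UNIV P1" and P1_cont: "continuous_on UNIV P1"
    and P2_convex: "convex_on UNIV P2" and P2_cont: "continuous_on UNIV P2"
    and g_cont: "\<And>i. i < m \<Longrightarrow> continuous_on UNIV (g i)"
    and feas_nonempty: "\<exists>x. feas m g x"
    \<comment> \<open>Assumption A\<close>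
    and A1: "Lf-lipschitz_on UNIV gf"
    and A2_deriv: "\<And>i x. i < m \<Longrightarrow> (g i has_derivative (\<lambda>h. gg i x \<bullet> h)) (at x)"
    and A2_lip: "\<And>i. i < m \<Longrightarrow> \<exists>L. L-lipschitz_on UNIV (gg i)"
    and A3: "\<And>\<alpha>. bounded {x. feas m g x \<and> Fval f P1 P2 x \<le> \<alpha>}"
    \<comment> \<open>Assumption B (MFCQ)\<close>
    and B: "\<And>x. feas m g x \<Longrightarrow> \<exists>d. \<forall>i<m. g i x = 0 \<longrightarrow> gg i x \<bullet> d < 0"
    \<comment> \<open>algorithm parameters and choices\<close>
    and c_pos: "c > 0" and Lmin_pos: "0 < Lmin" and Lmin_Lmax: "Lmin < Lmax" and tau: "\<tau> > 1"
    and x0_feas: "feas m g x0"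
    and xisel: "\<And>t x. xisel t x \<in> subgrad P2 x"
    and Lf0: "\<And>t. Lmin \<le> Lf0 t \<and> Lf0 t \<le> Lmax"
    and Lg0: "\<And>t i. i < m \<Longrightarrow> Lmin \<le> Lg0 t i \<and> Lg0 t i \<le> Lmax"
  defines "X \<equiv> scp_x m f gf g gg P1 P2 c \<tau> x0 xisel Lf0 Lg0"
    and "LT \<equiv> (\<lambda>t k. trials m f gf g gg P1 P2 c \<tau> (X t) (xisel t (X t)) (Lf0 t, Lg0 t) k)"
    and "K \<equiv> (\<lambda>t. acc_index m f gf g gg P1 P2 c \<tau> (X t) (xisel t (X t)) (Lf0 t, Lg0 t))"
    and "Z \<equiv> (\<lambda>t k. sub_sol m gf g gg P1 (X t) (xisel t (X t)) (fst (LT t k)) (snd (LT t k)))"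
  shows
    \<comment> \<open>(i)\<close>
    "(\<forall>t. \<forall>k\<le>K t. \<exists>!z. is_sub_sol m gf g gg P1 (X t) (xisel t (X t)) (fst (LT t k)) (snd (LT t k)) z)
     \<and> (\<exists>k0::nat. k0 \<ge> 1 \<and> (\<forall>t. (\<exists>k<k0. accepted m f gf g gg P1 P2 c (X t) (xisel t (X t)) (LT t k))
                                 \<and> feas m g (X (Suc t))))
     \<comment> \<open>(ii)\<close>
     \<and> (\<exists>B. \<forall>t. \<bar>fst (LT t (K t))\<bar> \<le> B \<and> (\<forall>i<m. \<bar>snd (LT t (K t)) i\<bar> \<le> B))
     \<comment> \<open>(iii)\<close>
     \<and> (\<forall>t. \<forall>k\<le>K t. \<forall>i<m.
          (norm (gg i (X t) /\<^sub>R snd (LT t k) i))\<^sup>2 - 2 / snd (LT t k) i * g i (X t) > 0)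
     \<comment> \<open>(iv)\<close>
     \<and> (\<forall>t. \<forall>k\<le>K t. \<exists>lam :: nat \<Rightarrow> real.
          (\<forall>i<m. lam i \<ge> 0)
          \<and> (\<forall>x. sub_obj gf P1 (X t) (xisel t (X t)) (fst (LT t k)) (Z t k)
                   + (\<Sum>i<m. lam i * Gbar g gg (Z t k) (X t) (snd (LT t k)) i)
                 \<le> sub_obj gf P1 (X t) (xisel t (X t)) (fst (LT t k)) x
                   + (\<Sum>i<m. lam i * Gbar g gg x (X t) (snd (LT t k)) i))
          \<and> (\<forall>i<m. lam i * (g i (X t) + gg i (X t) \<bullet> (Z t k - X t)
                         + snd (LT t k) i / 2 * (norm (Z t k - X t))\<^sup>2) = 0)
          \<and> (let Lfg = fst (LT t k) + (\<Sum>i<m. lam i * snd (LT t k) i) in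
              0 \<in> (\<lambda>v. gf (X t) - xisel t (X t) + Lfg *\<^sub>R (Z t k - X t) + v
                        + (\<Sum>i<m. lam i *\<^sub>R gg i (X t))) ` subgrad P1 (Z t k)
              \<and> (feas m g (Z t k) \<longrightarrow>
                  (\<forall>x. Fval f P1 P2 (Z t k)
                       \<le> f (X t) + (gf (X t) - xisel t (X t)) \<bullet> (x - X t)
                         + Lfg / 2 * (norm (x - X t))\<^sup>2 + P1 x - P2 (X t)
                         + (\<Sum>i<m. lam i * (g i (X t) + gg i (X t) \<bullet> (x - X t)))
                         - Lfg / 2 * (norm (x - Z t k))\<^sup>2
                         - (fst (LT t k) - Lf) / 2 * (norm (Z t k - X t))\<^sup>2))))"
proof -
  interpret scp_ls_run m f gf g gg P1 P2 Lf c \<tau> x0 xisel Lf0 Lg0 Lmin Lmax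
    by unfold_locales
      (use f_grad A1 P1_convex A2_deriv A2_lip B c_pos tau x0_feas xisel Lmin_pos Lf0 Lg0 in auto)
  obtain k0 where "1 \<le> k0"
    and k0: "\<forall>t. feas m g (iterate t) \<and> (\<exists>k<k0. acc_at t (trial_at t k)) \<and> acc_idx t < k0"
    using inner_loop_bounded_and_feasible by blast
  show ?thesis
    unfolding assms(21-24)
    apply (intro conjI allI impI)
    subgoal by (rule trial_sub_sol_unique[OF iterate_feasible trial_at_pos])
    subgoal using \<open>1 \<le> k0\<close> k0 by blast
    subgoal by (rule accepted_pairs_bounded)
    subgoal by (rule trial_at_R_pos)
    subgoal
      by (rule scp_subproblem.sub_sol_kkt_bound[OF trial_at_subproblem
            trial_sol_is_sub_sol[OF iterate_feasible trial_at_pos] iterate_feasible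
            mfcq[OF iterate_feasible] f_grad A1 xisel])
    done
qed

end
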